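(* Let $M$ be a Riemann surface and let $f,g$ be meromorphic functions on $M$ such that $g$, viewed as a holomorphic map $M\to\mathbb{CP}^1$, is an immersion. Then the holomorphic Legendrian map \[\mathscr B(f,g)=\big[dg: f\,dg-\tfrac12 g\,df: g\,dg:\tfrac12 df\big]:M\to\mathbb{CP}^3\] is an immersion.
   Context: The expression for $\mathscr B(f,g)$ is in homogeneous coordinates on $\mathbb{CP}^3$: in a local holomorphic coordinate $x$ on $M$ one writes $\mathscr B(f,g)=[g':fg'-\tfrac12 f'g: gg':\tfrac12 f']$ and clears poles/common zeros. It is tangent to the contact structure $\xi\subset T\mathbb{CP}^3$ determined by the homogeneous $1$-form $z_0dz_1-z_1dz_0+z_2dz_3-z_3dz_2$ on $\mathbb C^4$. *)

theory Defs
  imports "HOL-Complex_Analysis.Complex_Analysis"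
begin

definition riemann_surface :: "'a topology \<Rightarrow> ('a set \<times> ('a \<Rightarrow> complex)) set \<Rightarrow> bool" where
  "riemann_surface M A \<longleftrightarrow>
     Hausdorff_space M \<and> connected_space M \<and> topspace M \<noteq> {} \<and>
     \<Union>(fst ` A) = topspace M \<and>
     (\<forall>(U, \<phi>)\<in>A. openin M U \<and> open (\<phi> ` U) \<and>
        homeomorphic_map (subtopology M U) (top_of_set (\<phi> ` U)) \<phi>) \<and>
     (\<forall>(U, \<phi>)\<in>A. \<forall>(V, \<psi>)\<in>A.
        (\<psi> \<circ> inv_into U \<phi>) holomorphic_on (\<phi> ` (U \<inter> V)))"

definition in_chart :: "'a set \<Rightarrow> ('a \<Rightarrow> complex) \<Rightarrow> ('a \<Rightarrow> complex) \<Rightarrow> complex \<Rightarrow> complex" where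
  "in_chart U \<phi> f = f \<circ> inv_into U \<phi>"

text \<open>A meromorphic function on M (a holomorphic map to CP^1 not identically infinity):
  meromorphic in every chart.  Values at poles are irrelevant.\<close>
definition meromorphic_fun :: "'a topology \<Rightarrow> ('a set \<times> ('a \<Rightarrow> complex)) set \<Rightarrow> ('a \<Rightarrow> complex) \<Rightarrow> bool" where
  "meromorphic_fun M A f \<longleftrightarrow> (\<forall>(U, \<phi>)\<in>A. (in_chart U \<phi> f) meromorphic_on (\<phi> ` U))"

text \<open>Given meromorphic homogeneous coordinates v 0, ..., v n (in a local coordinate x near z),
  the map x |-> [v 0 x : ... : v n x] into CP^n (poles and common zeros cleared) is an
  immersion at z: there is a holomorphic lift w = h * v near z with w z \<noteq> 0, and in
  every standard affine chart {Z_i \<noteq> 0} of CP^n containing the image point the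
  differential of the affine coordinates w_j / w_i is nonzero (i.e. injective).\<close>
definition merom_immersion_at :: "nat \<Rightarrow> (nat \<Rightarrow> complex \<Rightarrow> complex) \<Rightarrow> complex \<Rightarrow> bool" where
  "merom_immersion_at n v z \<longleftrightarrow>
     (\<exists>r>0. \<exists>w h.
        (\<forall>k\<le>n. w k holomorphic_on ball z r) \<and>
        (\<forall>x\<in>ball z r - {z}. \<forall>k\<le>n. w k x = h x * v k x) \<and>
        (\<exists>k\<le>n. w k z \<noteq> 0) \<and>
        (\<forall>i\<le>n. w i z \<noteq> 0 \<longrightarrow> (\<exists>j\<le>n. deriv (\<lambda>x. w j x / w i x) z \<noteq> 0)))"

definition merom_immersion ::
  "'a topology \<Rightarrow> ('a set \<times> ('a \<Rightarrow> complex)) set \<Rightarrow> nat \<Rightarrow>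
   ('a set \<Rightarrow> ('a \<Rightarrow> complex) \<Rightarrow> nat \<Rightarrow> complex \<Rightarrow> complex) \<Rightarrow> bool" where
  "merom_immersion M A n V \<longleftrightarrow>
     (\<forall>(U, \<phi>)\<in>A. \<forall>p\<in>U. merom_immersion_at n (V U \<phi>) (\<phi> p))"

definition cp1_coords :: "('a \<Rightarrow> complex) \<Rightarrow> 'a set \<Rightarrow> ('a \<Rightarrow> complex) \<Rightarrow> nat \<Rightarrow> complex \<Rightarrow> complex" where
  "cp1_coords g U \<phi> k = (if k = 0 then in_chart U \<phi> g else (\<lambda>_. 1))"

definition B_coords :: "('a \<Rightarrow> complex) \<Rightarrow> ('a \<Rightarrow> complex) \<Rightarrow> 'a set \<Rightarrow> ('a \<Rightarrow> complex) \<Rightarrow> nat \<Rightarrow> complex \<Rightarrow> complex" where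
  "B_coords f g U \<phi> k =
     (let F = in_chart U \<phi> f; G = in_chart U \<phi> g in
      if k = 0 then (\<lambda>x. deriv G x)
      else if k = 1 then (\<lambda>x. F x * deriv G x - 1/2 * G x * deriv F x)
      else if k = 2 then (\<lambda>x. G x * deriv G x)
      else (\<lambda>x. 1/2 * deriv F x))"

end

theory Submission
  imports Defs
begin

text \<open>
  A map to \<open>CP\<^sup>n\<close> is an immersion at \<open>z\<close> iff a holomorphic lift \<open>w\<close> has \<open>w(z)\<close> and \<open>w'(z)\<close>
  linearly independent, i.e. some Wronskian \<open>w\<^sub>a w\<^sub>b' - w\<^sub>b w\<^sub>a'\<close> is nonzero at \<open>z\<close>. Unlike the
  condition in affine charts, this is plainly invariant under rescaling the lift and under signed
  permutations of the coordinates.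

  Since \<open>g\<close> immerses into \<open>CP\<^sup>1\<close>, near each point either \<open>g\<close> is holomorphic with \<open>g' \<noteq> 0\<close>, or \<open>g\<close>
  has a simple pole. In the first case, if \<open>f\<close> is holomorphic the coordinates \<open>dg\<close> and \<open>g dg\<close> of
  \<open>B(f,g)\<close> have Wronskian \<open>(g')\<^sup>3\<close>; if \<open>f = c/(x - z)\<^sup>N\<close> with \<open>c(z) \<noteq> 0\<close>, the lift by
  \<open>(x - z)\<^sup>N\<^sup>+\<^sup>1\<close> makes \<open>dg\<close> and \<open>g dg\<close> vanish at \<open>z\<close>, while \<open>f dg - g df/2\<close> and \<open>df/2\<close> have
  Wronskian \<open>-N(N+2) c(z)\<^sup>2 g'(z)/4 \<noteq> 0\<close>. A simple pole of \<open>g\<close> becomes a simple zero under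
  \<open>(f, g) \<mapsto> (f/g\<^sup>2, -1/g)\<close>, which changes \<open>B\<close> only by a signed permutation of the coordinates and
  a common factor.
\<close>

definition wronskian :: "(complex \<Rightarrow> complex) \<Rightarrow> (complex \<Rightarrow> complex) \<Rightarrow> complex \<Rightarrow> complex" where
  "wronskian u v z = u z * deriv v z - v z * deriv u z"

lemma wronskian_swap: "wronskian v u z = - wronskian u v z"
  by (simp add: wronskian_def)

lemma wronskian_exchange:
  "u z * wronskian v w z = v z * wronskian u w z - w z * wronskian u v z"
  by (simp add: wronskian_def algebra_simps)

lemma wronskian_cmult:
  assumes "u field_differentiable at z" "v field_differentiable at z"
  shows "wronskian (\<lambda>x. a * u x) (\<lambda>x. b * v x) z = a * b * wronskian u v z"
  using assms by (simp add: wronskian_def algebra_simps)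

lemma deriv_divide_eq_wronskian:
  assumes "u field_differentiable at z" "v field_differentiable at z" "v z \<noteq> 0"
  shows "deriv (\<lambda>x. u x / v x) z = wronskian v u z / v z ^ 2"
  using assms by (simp add: wronskian_def algebra_simps)

lemma eventually_analytic_at_nhds:
  assumes "f analytic_on {z}"
  shows "\<forall>\<^sub>F x in nhds z. f analytic_on {x}"
proof -
  obtain S where "open S" "z \<in> S" "f holomorphic_on S"
    using assms analytic_at by blast
  then show ?thesis
    unfolding eventually_nhds by (blast intro: holomorphic_on_imp_analytic_at)
qed

lemma eventually_at_imp_eventually_nhds:
  fixes z :: "'a::t1_space"
  assumes "\<forall>\<^sub>F x in at z. P x"
  shows "\<forall>\<^sub>F x in at z. eventually P (nhds x)"
proof -
  obtain S where S: "open S" "z \<in> S" "\<forall>x\<in>S. x \<noteq> z \<longrightarrow> P x"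
    using assms unfolding eventually_at_topological by blast
  have "\<forall>\<^sub>F x in at z. x \<in> S - {z}"
    using S unfolding eventually_at_topological by blast
  then show ?thesis
  proof eventually_elim
    case (elim x)
    have "\<forall>\<^sub>F y in nhds x. y \<in> S - {z}"
      using S(1) elim by (intro eventually_nhds_in_open open_delete) auto
    then show ?case
      by eventually_elim (use S in auto)
  qed
qed

lemma eventually_neq_if_deriv_neq_0:
  assumes "(f has_field_derivative D) (at z)" "D \<noteq> 0"
  shows "\<forall>\<^sub>F x in at z. f x \<noteq> f z"
proof -
  have "((\<lambda>x. (f x - f z) / (x - z)) \<longlongrightarrow> D) (at z)"
    using assms(1) by (simp add: has_field_derivative_iff)
  then have "\<forall>\<^sub>F x in at z. (f x - f z) / (x - z) \<noteq> 0"
    using assms(2) tendsto_imp_eventually_ne by blast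
  then show ?thesis
    by eventually_elim auto
qed

lemma analytic_at_common_ball:
  fixes n :: nat
  assumes "\<forall>k\<le>n. w k analytic_on {z}" "\<forall>\<^sub>F x in at z. P x"
  obtains r where "r > 0" "\<forall>k\<le>n. w k holomorphic_on ball z r" "\<forall>x\<in>ball z r - {z}. P x"
proof -
  have "\<forall>\<^sub>F x in nhds z. \<forall>k\<in>{..n}. w k analytic_on {x}"
    by (rule eventually_ball_finite) (use assms(1) eventually_analytic_at_nhds in auto)
  then have "\<forall>\<^sub>F x in at z. \<forall>k\<in>{..n}. w k analytic_on {x}"
    unfolding eventually_nhds_conv_at by blast
  then have "\<forall>\<^sub>F x in at z. (\<forall>k\<in>{..n}. w k analytic_on {x}) \<and> P x"
    using assms(2) by (rule eventually_conj)
  then obtain r where r: "r > 0"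
    "\<And>x. x \<noteq> z \<Longrightarrow> dist x z < r \<Longrightarrow> (\<forall>k\<in>{..n}. w k analytic_on {x}) \<and> P x"
    unfolding eventually_at by auto
  have "w k analytic_on ball z r" if "k \<le> n" for k
  proof (rule analytic_on_analytic_at[THEN iffD2], rule ballI)
    fix x assume "x \<in> ball z r"
    then show "w k analytic_on {x}"
      using assms(1) r(2) that by (cases "x = z") (simp_all add: dist_commute)
  qed
  then show ?thesis
    by (intro that[OF r(1)]) (use r(2) in \<open>auto simp: dist_commute analytic_imp_holomorphic\<close>)
qed

definition wronskian_immersion_at :: "nat \<Rightarrow> (nat \<Rightarrow> complex \<Rightarrow> complex) \<Rightarrow> complex \<Rightarrow> bool" where
  "wronskian_immersion_at n v z \<longleftrightarrow>
     (\<exists>w h. (\<forall>k\<le>n. w k analytic_on {z}) \<and> (\<forall>\<^sub>F x in at z. \<forall>k\<le>n. w k x = h x * v k x) \<and>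
        (\<exists>a\<le>n. \<exists>b\<le>n. wronskian (w a) (w b) z \<noteq> 0))"

lemma wronskian_immersion_atI:
  assumes "\<forall>k\<le>n. w k analytic_on {z}" "\<forall>\<^sub>F x in at z. \<forall>k\<le>n. w k x = h x * v k x"
    and "a \<le> n" "b \<le> n" "wronskian (w a) (w b) z \<noteq> 0"
  shows "wronskian_immersion_at n v z"
  using assms unfolding wronskian_immersion_at_def by blast

lemma wronskian_immersion_at_if_merom_immersion_at:
  assumes "merom_immersion_at n v z"
  shows "wronskian_immersion_at n v z"
proof -
  obtain r w h where r: "r > 0" and hol: "\<forall>k\<le>n. w k holomorphic_on ball z r"
    and lift: "\<forall>x\<in>ball z r - {z}. \<forall>k\<le>n. w k x = h x * v k x"
    and "\<exists>k\<le>n. w k z \<noteq> 0" and "\<forall>i\<le>n. w i z \<noteq> 0 \<longrightarrow> (\<exists>j\<le>n. deriv (\<lambda>x. w j x / w i x) z \<noteq> 0)"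
    using assms unfolding merom_immersion_at_def by blast
  then obtain i j where ij: "i \<le> n" "j \<le> n" "w i z \<noteq> 0" "deriv (\<lambda>x. w j x / w i x) z \<noteq> 0"
    by blast
  have ana: "\<forall>k\<le>n. w k analytic_on {z}"
    using hol r by (auto intro: holomorphic_on_imp_analytic_at)
  then have "deriv (\<lambda>x. w j x / w i x) z = wronskian (w i) (w j) z / w i z ^ 2"
    using ij by (intro deriv_divide_eq_wronskian) (auto intro: analytic_on_imp_differentiable_at)
  then have "wronskian (w i) (w j) z \<noteq> 0"
    using ij(4) by auto
  moreover have "\<forall>\<^sub>F x in at z. \<forall>k\<le>n. w k x = h x * v k x"
    using eventually_at_in_open[of "ball z r" z] r lift by (auto elim!: eventually_mono)
  ultimately show ?thesis
    using ana ij(1,2) by (intro wronskian_immersion_atI)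
qed

lemma merom_immersion_at_if_wronskian_immersion_at:
  assumes "wronskian_immersion_at n v z"
  shows "merom_immersion_at n v z"
proof -
  obtain w h a b where ana: "\<forall>k\<le>n. w k analytic_on {z}"
    and lift: "\<forall>\<^sub>F x in at z. \<forall>k\<le>n. w k x = h x * v k x"
    and ab: "a \<le> n" "b \<le> n" and W: "wronskian (w a) (w b) z \<noteq> 0"
    using assms unfolding wronskian_immersion_at_def by blast
  obtain r where "r > 0" "\<forall>k\<le>n. w k holomorphic_on ball z r"
    "\<forall>x\<in>ball z r - {z}. \<forall>k\<le>n. w k x = h x * v k x"
    using analytic_at_common_ball[OF ana lift] .
  moreover have "w a z \<noteq> 0 \<or> w b z \<noteq> 0"
    using W by (auto simp: wronskian_def)
  then have "\<exists>k\<le>n. w k z \<noteq> 0"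
    using ab by blast
  moreover have "\<exists>j\<le>n. deriv (\<lambda>x. w j x / w i x) z \<noteq> 0" if i: "i \<le> n" "w i z \<noteq> 0" for i
  proof (rule ccontr)
    assume flat: "\<not> ?thesis"
    have "wronskian (w i) (w j) z = 0" if "j \<le> n" for j
    proof -
      have "deriv (\<lambda>x. w j x / w i x) z = wronskian (w i) (w j) z / w i z ^ 2"
        using ana i that by (intro deriv_divide_eq_wronskian) (auto intro: analytic_on_imp_differentiable_at)
      then show ?thesis
        using flat i(2) that by auto
    qed
    then have "w i z * wronskian (w a) (w b) z = 0"
      using wronskian_exchange[of "w i" z "w a" "w b"] ab by simp
    then show False
      using W i(2) by simp
  qed
  ultimately show ?thesis
    unfolding merom_immersion_at_def by blast
qed

lemma merom_immersion_at_iff_wronskian: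
  "merom_immersion_at n v z \<longleftrightarrow> wronskian_immersion_at n v z"
  using merom_immersion_at_if_wronskian_immersion_at wronskian_immersion_at_if_merom_immersion_at
  by blast

lemma wronskian_immersion_at_transform:
  assumes "wronskian_immersion_at n v z"
    and "\<forall>k\<le>n. \<sigma> k \<le> n \<and> \<sigma> (\<sigma> k) = k" and "\<forall>k\<le>n. c k \<noteq> 0"
    and "\<forall>\<^sub>F x in at z. \<forall>k\<le>n. v (\<sigma> k) x = c k * q x * u k x"
  shows "wronskian_immersion_at n u z"
proof -
  obtain w h a b where ana: "\<forall>k\<le>n. w k analytic_on {z}"
    and lift: "\<forall>\<^sub>F x in at z. \<forall>k\<le>n. w k x = h x * v k x"
    and ab: "a \<le> n" "b \<le> n" and W: "wronskian (w a) (w b) z \<noteq> 0"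
    using assms(1) unfolding wronskian_immersion_at_def by blast
  have \<sigma>: "\<sigma> k \<le> n" "\<sigma> (\<sigma> k) = k" if "k \<le> n" for k
    using assms(2) that by auto
  define w' where "w' k = (\<lambda>x. inverse (c k) * w (\<sigma> k) x)" for k
  have ana': "\<forall>k\<le>n. w' k analytic_on {z}"
    using ana \<sigma> unfolding w'_def by (auto intro!: analytic_intros)
  have lift': "\<forall>\<^sub>F x in at z. \<forall>k\<le>n. w' k x = (h x * q x) * u k x"
    using lift assms(4) by eventually_elim (use assms(3) \<sigma> in \<open>simp add: w'_def field_simps\<close>)
  have "wronskian (w' (\<sigma> a)) (w' (\<sigma> b)) z
      = inverse (c (\<sigma> a)) * inverse (c (\<sigma> b)) * wronskian (w a) (w b) z"
    unfolding w'_def \<sigma>(2)[OF ab(1)] \<sigma>(2)[OF ab(2)] using ana ab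
    by (intro wronskian_cmult) (auto intro: analytic_on_imp_differentiable_at)
  then have "wronskian (w' (\<sigma> a)) (w' (\<sigma> b)) z \<noteq> 0"
    using W assms(3) \<sigma>(1) ab by simp
  then show ?thesis
    by (rule wronskian_immersion_atI[OF ana' lift' \<sigma>(1)[OF ab(1)] \<sigma>(1)[OF ab(2)]])
qed

lemma wronskian_immersion_at_cong:
  assumes "wronskian_immersion_at n v z" "\<forall>\<^sub>F x in at z. \<forall>k\<le>n. v k x = u k x"
  shows "wronskian_immersion_at n u z"
  using wronskian_immersion_at_transform[OF assms(1), of id "\<lambda>_. 1" "\<lambda>_. 1" u] assms(2) by simp

definition B_local :: "(complex \<Rightarrow> complex) \<Rightarrow> (complex \<Rightarrow> complex) \<Rightarrow> nat \<Rightarrow> complex \<Rightarrow> complex" where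
  "B_local F G k =
     (if k = 0 then deriv G
      else if k = 1 then (\<lambda>x. F x * deriv G x - 1/2 * G x * deriv F x)
      else if k = 2 then (\<lambda>x. G x * deriv G x)
      else (\<lambda>x. 1/2 * deriv F x))"

lemma B_coords_eq_B_local: "B_coords f g U \<phi> = B_local (in_chart U \<phi> f) (in_chart U \<phi> g)"
  by (auto simp: B_coords_def B_local_def Let_def fun_eq_iff)

lemma B_local_analytic:
  assumes "F analytic_on {z}" "G analytic_on {z}"
  shows "B_local F G k analytic_on {z}"
  using assms unfolding B_local_def by (auto intro!: analytic_intros)

lemma eventually_B_local_cong:
  assumes "\<forall>\<^sub>F x in at z. F x = F' x" "\<forall>\<^sub>F x in at z. G x = G' x"
  shows "\<forall>\<^sub>F x in at z. \<forall>k. B_local F G k x = B_local F' G' k x"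
proof -
  have "\<forall>\<^sub>F x in at z. \<forall>\<^sub>F y in nhds x. F y = F' y \<and> G y = G' y"
    using eventually_conj[OF assms] by (rule eventually_at_imp_eventually_nhds)
  then show ?thesis
  proof eventually_elim
    case (elim x)
    then have "deriv F x = deriv F' x" "deriv G x = deriv G' x" "F x = F' x" "G x = G' x"
      by (auto intro: deriv_cong_ev elim: eventually_mono dest: eventually_nhds_x_imp_x)
    then show ?case
      by (simp add: B_local_def)
  qed
qed

lemma wronskian_immersion_at_B_local_cong:
  assumes "wronskian_immersion_at 3 (B_local F G) z"
    and "\<forall>\<^sub>F x in at z. F x = F' x" "\<forall>\<^sub>F x in at z. G x = G' x"
  shows "wronskian_immersion_at 3 (B_local F' G') z"
  using eventually_B_local_cong[OF assms(2,3)]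
  by (intro wronskian_immersion_at_cong[OF assms(1)]) (auto elim: eventually_mono)

lemma wronskian_immersion_at_B_local_analytic:
  assumes F: "F analytic_on {z}" and G: "G analytic_on {z}" "deriv G z \<noteq> 0"
  shows "wronskian_immersion_at 3 (B_local F G) z"
proof -
  have "G field_differentiable at z" "deriv G field_differentiable at z"
    using G by (auto intro: analytic_on_imp_differentiable_at analytic_intros)
  then have "wronskian (B_local F G 0) (B_local F G 2) z = deriv G z ^ 3"
    by (simp add: wronskian_def B_local_def algebra_simps power3_eq_cube)
  then show ?thesis
    using B_local_analytic[OF F G(1)] G(2)
    by (intro wronskian_immersion_atI[of 3 "B_local F G" z "\<lambda>_. 1" _ 0 2]) auto
qed

lemma has_field_derivative_divide_power:
  fixes c :: "complex \<Rightarrow> complex"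
  assumes "(c has_field_derivative c') (at x)" "x \<noteq> z"
  shows "((\<lambda>y. c y / (y - z) ^ N) has_field_derivative
           (c' * (x - z) - of_nat N * c x) / (x - z) ^ Suc N) (at x)"
proof -
  have "((\<lambda>y. c y / (y - z) ^ N) has_field_derivative
      (c' * (x - z) ^ N - c x * (of_nat N * (x - z) ^ (N - 1))) / ((x - z) ^ N * (x - z) ^ N)) (at x)"
    using assms by (auto intro!: derivative_eq_intros)
  moreover have "(c' * e ^ N - c x * (of_nat N * e ^ (N - 1))) / (e ^ N * e ^ N)
      = (c' * e - of_nat N * c x) / e ^ Suc N" if "e \<noteq> 0" for e
    using that by (cases N) (simp_all add: field_simps)
  moreover have "x - z \<noteq> 0"
    using assms(2) by simp
  ultimately show ?thesis
    by metis
qed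

text \<open>The lift \<open>(x - z)\<^sup>N\<^sup>+\<^sup>1 \<cdot> B_local (\<lambda>x. c x / (x - z)\<^sup>N) G\<close> of \<open>B\<close> at a pole of order \<open>N\<close>,
  expanded so that it is visibly holomorphic at \<open>z\<close>.\<close>

definition B_pole_lift ::
  "(complex \<Rightarrow> complex) \<Rightarrow> (complex \<Rightarrow> complex) \<Rightarrow> nat \<Rightarrow> complex \<Rightarrow> nat \<Rightarrow> complex \<Rightarrow> complex"
  where
  "B_pole_lift c G N z k =
     (if k = 0 then (\<lambda>x. (x - z) ^ Suc N * deriv G x)
      else if k = 1 then
        (\<lambda>x. (x - z) * c x * deriv G x - 1/2 * G x * (deriv c x * (x - z) - of_nat N * c x))
      else if k = 2 then (\<lambda>x. (x - z) ^ Suc N * (G x * deriv G x))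
      else (\<lambda>x. 1/2 * (deriv c x * (x - z) - of_nat N * c x)))"

lemma B_pole_lift_analytic:
  assumes "c analytic_on {z}" "G analytic_on {z}"
  shows "B_pole_lift c G N z k analytic_on {z}"
  using assms unfolding B_pole_lift_def by (auto intro!: analytic_intros)

lemma B_pole_lift_eq:
  assumes "c field_differentiable at x" "x \<noteq> z" "k \<le> 3"
  shows "B_pole_lift c G N z k x = (x - z) ^ Suc N * B_local (\<lambda>x. c x / (x - z) ^ N) G k x"
proof -
  define e where "e = x - z"
  have e: "e \<noteq> 0"
    using assms(2) by (simp add: e_def)
  have dF: "deriv (\<lambda>x. c x / (x - z) ^ N) x = (deriv c x * e - of_nat N * c x) / e ^ Suc N"
    unfolding e_def using assms(1,2)
    by (intro DERIV_imp_deriv has_field_derivative_divide_power) (simp_all add: field_differentiable_derivI)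
  from assms(3) have "k = 0 \<or> k = 1 \<or> k = 2 \<or> k = 3"
    by presburger
  then show ?thesis
    using e by (elim disjE; simp add: B_pole_lift_def B_local_def dF; simp add: e_def[symmetric] field_simps)
qed

lemma wronskian_B_pole_lift:
  assumes c: "c analytic_on {z}" and G: "G analytic_on {z}"
  shows "wronskian (B_pole_lift c G N z 3) (B_pole_lift c G N z 1) z
       = - (of_nat N * (of_nat N + 2) / 4) * c z ^ 2 * deriv G z"
proof -
  have Dc: "(c has_field_derivative deriv c z) (at z)" "(deriv c has_field_derivative deriv (deriv c) z) (at z)"
    and DG: "(G has_field_derivative deriv G z) (at z)" "(deriv G has_field_derivative deriv (deriv G) z) (at z)"
    using c G by (auto intro!: analytic_derivI analytic_intros)
  have L3: "B_pole_lift c G N z 3 = (\<lambda>x. 1/2 * (deriv c x * (x - z) - of_nat N * c x))"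
    and L1: "B_pole_lift c G N z 1
      = (\<lambda>x. (x - z) * c x * deriv G x - 1/2 * G x * (deriv c x * (x - z) - of_nat N * c x))"
    by (simp_all add: B_pole_lift_def)
  have D3: "deriv (B_pole_lift c G N z 3) z = 1/2 * (1 - of_nat N) * deriv c z"
    unfolding L3 by (rule DERIV_imp_deriv) (auto intro!: derivative_eq_intros Dc simp: algebra_simps)
  have D1: "deriv (B_pole_lift c G N z 1) z
      = c z * deriv G z - 1/2 * (deriv G z * (- of_nat N * c z) + G z * (1 - of_nat N) * deriv c z)"
    unfolding L1 by (rule DERIV_imp_deriv) (auto intro!: derivative_eq_intros Dc DG simp: field_simps)
  show ?thesis
    unfolding wronskian_def D1 D3 by (simp add: B_pole_lift_def field_simps power2_eq_square)
qed

lemma wronskian_immersion_at_B_local_pole: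
  assumes c: "c analytic_on {z}" "c z \<noteq> 0" and G: "G analytic_on {z}" "deriv G z \<noteq> 0"
    and "N > 0"
  shows "wronskian_immersion_at 3 (B_local (\<lambda>x. c x / (x - z) ^ N) G) z"
proof -
  have "\<forall>\<^sub>F x in at z. c analytic_on {x}"
    using eventually_analytic_at_nhds[OF c(1)] unfolding eventually_nhds_conv_at by blast
  then have "\<forall>\<^sub>F x in at z. c analytic_on {x} \<and> x \<noteq> z"
    using eventually_neq_at_within by (rule eventually_conj)
  then have "\<forall>\<^sub>F x in at z. \<forall>k\<le>3.
      B_pole_lift c G N z k x = (x - z) ^ Suc N * B_local (\<lambda>x. c x / (x - z) ^ N) G k x"
  proof eventually_elim
    case (elim x)
    then show ?case
      by (intro allI impI B_pole_lift_eq) (auto intro: analytic_on_imp_differentiable_at)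
  qed
  moreover have "(of_nat N * (of_nat N + 2) :: complex) = of_nat (N * (N + 2))"
    by (simp add: algebra_simps)
  then have "(of_nat N * (of_nat N + 2) :: complex) \<noteq> 0"
    using \<open>N > 0\<close> by (simp only: of_nat_eq_0_iff) simp
  then have "wronskian (B_pole_lift c G N z 3) (B_pole_lift c G N z 1) z \<noteq> 0"
    unfolding wronskian_B_pole_lift[OF c(1) G(1)] using c(2) G(2) by simp
  ultimately show ?thesis
    using B_pole_lift_analytic[OF c(1) G(1)] by (intro wronskian_immersion_atI[where a = 3 and b = 1]) auto
qed

lemma pole_eventually_eq_divide_power:
  assumes "isolated_singularity_at F z" "is_pole F z"
  obtains c N where "c analytic_on {z}" "c z \<noteq> 0" "N > 0"
    "\<forall>\<^sub>F x in at z. c x / (x - z) ^ N = F x"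
proof -
  obtain r where "r > 0" "F holomorphic_on ball z r - {z}"
    using assms(1) analytic_imp_holomorphic unfolding isolated_singularity_at_def by blast
  then obtain \<rho> where "zorder F z < 0" "zor_poly F z z \<noteq> 0" "\<rho> > 0"
    and hol: "zor_poly F z holomorphic_on cball z \<rho>"
    and eq: "\<forall>x\<in>cball z \<rho> - {z}. F x = zor_poly F z x / (x - z) ^ nat (- zorder F z)"
    using zorder_exist_pole[of F "ball z r" z] assms(2) by auto
  have "zor_poly F z analytic_on {z}"
    using \<open>\<rho> > 0\<close> holomorphic_on_subset[OF hol ball_subset_cball]
    by (intro holomorphic_on_imp_analytic_at[of _ "ball z \<rho>"]) auto
  moreover have "\<forall>\<^sub>F x in at z. x \<in> ball z \<rho> - {z}"
    using \<open>\<rho> > 0\<close> by (intro eventually_at_in_open) auto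
  then have "\<forall>\<^sub>F x in at z. zor_poly F z x / (x - z) ^ nat (- zorder F z) = F x"
    by eventually_elim (use eq in auto)
  ultimately show ?thesis
    using \<open>zorder F z < 0\<close> \<open>zor_poly F z z \<noteq> 0\<close> by (intro that[of "zor_poly F z" "nat (- zorder F z)"]) auto
qed

lemma wronskian_immersion_at_B_local_meromorphic:
  assumes F: "F meromorphic_on {z}" and G: "G analytic_on {z}" "deriv G z \<noteq> 0"
  shows "wronskian_immersion_at 3 (B_local F G) z"
proof -
  have iso: "isolated_singularity_at F z" and "not_essential F z"
    using F by (simp_all add: meromorphic_at_iff)
  then consider l where "F \<midarrow>z\<rightarrow> l" | "is_pole F z"
    unfolding not_essential_def by blast
  then show ?thesis
  proof cases
    case 1
    have "wronskian_immersion_at 3 (B_local (remove_sings F) G) z"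
      using remove_sings_analytic_at[OF iso 1] G by (rule wronskian_immersion_at_B_local_analytic)
    then show ?thesis
      using eventually_remove_sings_eq_at[OF iso] by (rule wronskian_immersion_at_B_local_cong) simp
  next
    case 2
    obtain c N where "c analytic_on {z}" "c z \<noteq> 0" "N > 0"
      and F_eq: "\<forall>\<^sub>F x in at z. c x / (x - z) ^ N = F x"
      using iso 2 by (rule pole_eventually_eq_divide_power)
    then have "wronskian_immersion_at 3 (B_local (\<lambda>x. c x / (x - z) ^ N) G) z"
      using G by (intro wronskian_immersion_at_B_local_pole)
    then show ?thesis
      using F_eq by (rule wronskian_immersion_at_B_local_cong) simp
  qed
qed

lemma B_local_inversion:
  assumes "F field_differentiable at x" "p field_differentiable at x" "p x \<noteq> 0" "k \<le> 3"
  shows "B_local (\<lambda>y. F y * p y ^ 2) (\<lambda>y. - p y) ((k + 2) mod 4) x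
       = (if k < 2 then -1 else 1) * p x ^ 3 * B_local F (\<lambda>y. 1 / p y) k x"
proof -
  have DF: "(F has_field_derivative deriv F x) (at x)" and Dp: "(p has_field_derivative deriv p x) (at x)"
    using assms(1,2) by (simp_all add: field_differentiable_derivI)
  have "deriv (\<lambda>y. F y * p y ^ 2) x = deriv F x * p x ^ 2 + 2 * F x * p x * deriv p x"
    by (rule DERIV_imp_deriv) (auto intro!: derivative_eq_intros DF Dp simp: algebra_simps)
  moreover have "deriv (\<lambda>y. 1 / p y) x = - deriv p x / p x ^ 2"
    and "deriv (\<lambda>y. - p y) x = - deriv p x"
    using assms(2,3) by simp_all
  moreover from assms(4) have "k = 0 \<or> k = 1 \<or> k = 2 \<or> k = 3"
    by presburger
  ultimately show ?thesis
    using assms(3) by (elim disjE; simp add: B_local_def; simp add: field_simps power2_eq_square power3_eq_cube)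
qed

lemma wronskian_immersion_at_B_local_inverse:
  assumes F: "F meromorphic_on {z}" and p: "p analytic_on {z}" "p z = 0" "deriv p z \<noteq> 0"
  shows "wronskian_immersion_at 3 (B_local F (\<lambda>x. 1 / p x)) z"
proof -
  have "p meromorphic_on {z}"
    using p(1) by (rule analytic_on_imp_meromorphic_on)
  then have "(\<lambda>x. F x * p x ^ 2) meromorphic_on {z}"
    using F by (intro meromorphic_intros)
  moreover have "(\<lambda>x. - p x) analytic_on {z}" "deriv (\<lambda>x. - p x) z \<noteq> 0"
    using p by (auto intro!: analytic_intros simp: analytic_on_imp_differentiable_at)
  ultimately have Bt: "wronskian_immersion_at 3 (B_local (\<lambda>x. F x * p x ^ 2) (\<lambda>x. - p x)) z"
    by (rule wronskian_immersion_at_B_local_meromorphic)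
  have "\<forall>\<^sub>F x in at z. p x \<noteq> 0"
    using eventually_neq_if_deriv_neq_0[OF analytic_derivI[OF p(1)] p(3)] p(2) by simp
  moreover have "\<forall>\<^sub>F x in at z. F analytic_on {x}"
    using F by (simp add: meromorphic_at_iff isolated_singularity_at_altdef)
  moreover have "\<forall>\<^sub>F x in at z. p analytic_on {x}"
    using eventually_analytic_at_nhds[OF p(1)] unfolding eventually_nhds_conv_at by blast
  ultimately have inversion: "\<forall>\<^sub>F x in at z. \<forall>k\<le>3.
      B_local (\<lambda>y. F y * p y ^ 2) (\<lambda>y. - p y) ((k + 2) mod 4) x
      = (if k < 2 then -1 else 1) * p x ^ 3 * B_local F (\<lambda>y. 1 / p y) k x"
  proof eventually_elim
    case (elim x)
    then show ?case
      by (intro allI impI B_local_inversion) (auto intro: analytic_on_imp_differentiable_at)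
  qed
  have "\<forall>k\<le>3. (k + 2) mod 4 \<le> 3 \<and> ((k + 2) mod 4 + 2) mod 4 = (k::nat)"
  proof (intro allI impI)
    fix k :: nat
    assume "k \<le> 3"
    then consider "k = 0" | "k = 1" | "k = 2" | "k = 3"
      by fastforce
    then show "(k + 2) mod 4 \<le> 3 \<and> ((k + 2) mod 4 + 2) mod 4 = k"
      by cases simp_all
  qed
  then show ?thesis
    by (rule wronskian_immersion_at_transform[OF Bt _ _ inversion]) simp
qed

lemma wronskian_immersion_at_B_local_quotient:
  assumes F: "F meromorphic_on {z}" and uv: "u analytic_on {z}" "v analytic_on {z}" "wronskian v u z \<noteq> 0"
  shows "wronskian_immersion_at 3 (B_local F (\<lambda>x. u x / v x)) z"
proof (cases "v z = 0")
  case False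
  have "deriv (\<lambda>x. u x / v x) z = wronskian v u z / v z ^ 2"
    using uv False by (intro deriv_divide_eq_wronskian) (auto intro: analytic_on_imp_differentiable_at)
  then show ?thesis
    using F uv False by (intro wronskian_immersion_at_B_local_meromorphic) (auto intro!: analytic_intros)
next
  case True
  then have "u z \<noteq> 0"
    using uv(3) by (auto simp: wronskian_def)
  have "deriv (\<lambda>x. v x / u x) z = wronskian u v z / u z ^ 2"
    using uv \<open>u z \<noteq> 0\<close> by (intro deriv_divide_eq_wronskian) (auto intro: analytic_on_imp_differentiable_at)
  then have "deriv (\<lambda>x. v x / u x) z \<noteq> 0"
    using uv(3) \<open>u z \<noteq> 0\<close> by (simp add: wronskian_swap[of u v])
  then have "wronskian_immersion_at 3 (B_local F (\<lambda>x. 1 / (v x / u x))) z"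
    using F uv True \<open>u z \<noteq> 0\<close> by (intro wronskian_immersion_at_B_local_inverse) (auto intro!: analytic_intros)
  then show ?thesis
    by simp
qed

lemma wronskian_immersion_at_cp1_quotientE:
  assumes "wronskian_immersion_at 1 V z" "V 0 = G" "V 1 = (\<lambda>_. 1)"
  obtains u v where "u analytic_on {z}" "v analytic_on {z}" "wronskian v u z \<noteq> 0"
    "\<forall>\<^sub>F x in at z. G x = u x / v x"
proof -
  obtain w h a b where ana: "\<forall>k\<le>1. w k analytic_on {z}"
    and lift: "\<forall>\<^sub>F x in at z. \<forall>k\<le>1. w k x = h x * V k x"
    and ab: "a \<le> 1" "b \<le> 1" and W: "wronskian (w a) (w b) z \<noteq> 0"
    using assms(1) unfolding wronskian_immersion_at_def by blast
  have "wronskian f f z = 0" for f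
    by (simp add: wronskian_def)
  then have W10: "wronskian (w 1) (w 0) z \<noteq> 0"
    using ab W wronskian_swap[of "w 1" "w 0" z] by (auto simp: le_Suc_eq)
  then have "w 0 z \<noteq> 0 \<or> w 1 z \<noteq> 0"
    by (auto simp: wronskian_def)
  then have "\<forall>\<^sub>F x in at z. w 0 x \<noteq> 0 \<or> w 1 x \<noteq> 0"
    using ana analytic_at_neq_imp_eventually_neq[of "w 0" z 0] analytic_at_neq_imp_eventually_neq[of "w 1" z 0]
    by (auto elim: eventually_mono)
  with lift have "\<forall>\<^sub>F x in at z. G x = w 0 x / w 1 x"
    by eventually_elim (use assms(2,3) in auto)
  then show ?thesis
    using ana W10 by (intro that[of "w 0" "w 1"]) auto
qed

theorem merom_immersion_at_B_local:
  assumes F: "F meromorphic_on {z}"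
    and "merom_immersion_at 1 V z" "V 0 = G" "V 1 = (\<lambda>_. 1)"
  shows "merom_immersion_at 3 (B_local F G) z"
proof -
  obtain u v where uv: "u analytic_on {z}" "v analytic_on {z}" "wronskian v u z \<noteq> 0"
    and G: "\<forall>\<^sub>F x in at z. G x = u x / v x"
    using assms(2-4) unfolding merom_immersion_at_iff_wronskian by (rule wronskian_immersion_at_cp1_quotientE)
  have "wronskian_immersion_at 3 (B_local F (\<lambda>x. u x / v x)) z"
    by (rule wronskian_immersion_at_B_local_quotient[OF F uv])
  then show ?thesis
    unfolding merom_immersion_at_iff_wronskian
    by (rule wronskian_immersion_at_B_local_cong) (use G in \<open>auto elim: eventually_mono\<close>)
qed

theorem lemma3p3:
  fixes M :: "'a topology" and A :: "('a set \<times> ('a \<Rightarrow> complex)) set"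
    and f g :: "'a \<Rightarrow> complex"
  assumes "riemann_surface M A"
    and "meromorphic_fun M A f" and "meromorphic_fun M A g"
    and "merom_immersion M A 1 (cp1_coords g)"
  shows "merom_immersion M A 3 (B_coords f g)"
  unfolding merom_immersion_def
proof (clarify)
  fix U \<phi> p
  assume chart: "(U, \<phi>) \<in> A" "p \<in> U"
  have "in_chart U \<phi> f meromorphic_on \<phi> ` U"
    using assms(2) chart unfolding meromorphic_fun_def by auto
  then have "in_chart U \<phi> f meromorphic_on {\<phi> p}"
    by (rule meromorphic_on_subset) (use chart in auto)
  moreover have "merom_immersion_at 1 (cp1_coords g U \<phi>) (\<phi> p)"
    using assms(4) chart unfolding merom_immersion_def by blast
  ultimately show "merom_immersion_at 3 (B_coords f g U \<phi>) (\<phi> p)"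
    unfolding B_coords_eq_B_local by (rule merom_immersion_at_B_local) (simp_all add: cp1_coords_def)
qed

end
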